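(* Let $(M_0,d,\Gamma)$ be a cone-like space and let $\{x_n\}$ be a Cauchy sequence in $(M_0,d)$ which does not converge in $M_0$. Then there exist $x\in M_0$ and a sequence $\{f_n\}$ of elements of $\Gamma$ with $\lim_{n\to\infty}\rho(f_n)=0$ such that the Cauchy sequences $\{x_n\}$ and $\{f_n(x)\}$ are equivalent.
   Context: A cone-like space is a locally compact metric space $(M_0,d)$ together with a finitely generated, non-trivial group $\Gamma$ acting freely and properly discontinuously on $M_0$ by homotheties (i.e. for each $f\in\Gamma$ there is $\rho(f)>0$ with $d(f(x),f(y))=\rho(f)d(x,y)$ for all $x,y$), such that the identity is the only element of $\Gamma$ acting as an isometry, and such that the quotient $M_0/\Gamma$ is compact. Two Cauchy sequences $\{a_n\},\{b_n\}$ are equivalent if $d(a_n,b_n)\to0$. *)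

theory Defs
  imports "HOL-Analysis.Analysis"
begin

text \<open>The group \<Gamma> is represented by the set of maps through which it acts on M0
  (a free action is faithful). M0 is the whole carrier of a metric-space type.\<close>

inductive_set gen_group :: "('a \<Rightarrow> 'a) set \<Rightarrow> ('a \<Rightarrow> 'a) set" for S where
  gen_id: "id \<in> gen_group S"
| gen_base: "f \<in> S \<Longrightarrow> f \<in> gen_group S"
| gen_comp: "f \<in> gen_group S \<Longrightarrow> g \<in> gen_group S \<Longrightarrow> f \<circ> g \<in> gen_group S"
| gen_inv: "f \<in> gen_group S \<Longrightarrow> inv f \<in> gen_group S"

definition map_group :: "('a \<Rightarrow> 'a) set \<Rightarrow> bool" where
  "map_group G \<longleftrightarrow> id \<in> G \<and> (\<forall>f\<in>G. bij f \<and> inv f \<in> G) \<and> (\<forall>f\<in>G. \<forall>g\<in>G. f \<circ> g \<in> G)"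

definition finitely_generated_map_group :: "('a \<Rightarrow> 'a) set \<Rightarrow> bool" where
  "finitely_generated_map_group G \<longleftrightarrow> (\<exists>S. finite S \<and> S \<subseteq> G \<and> G = gen_group S)"

definition acts_freely :: "('a \<Rightarrow> 'a) set \<Rightarrow> bool" where
  "acts_freely G \<longleftrightarrow> (\<forall>f\<in>G. \<forall>x. f x = x \<longrightarrow> f = id)"

text \<open>Properly discontinuous action (locally compact setting): every compact set
  meets only finitely many of its translates.\<close>
definition properly_discontinuous :: "('a::topological_space \<Rightarrow> 'a) set \<Rightarrow> bool" where
  "properly_discontinuous G \<longleftrightarrow>
     (\<forall>K. compact K \<longrightarrow> finite {f \<in> G. f ` K \<inter> K \<noteq> {}})"

definition orbit :: "('a \<Rightarrow> 'a) set \<Rightarrow> 'a \<Rightarrow> 'a set" where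
  "orbit G x = (\<lambda>f. f x) ` G"

definition compact_quotient :: "('a::topological_space \<Rightarrow> 'a) set \<Rightarrow> bool" where
  "compact_quotient G \<longleftrightarrow>
     (\<exists>Q :: 'a set topology. quotient_map euclidean Q (orbit G) \<and> compact_space Q)"

definition homothety_ratio :: "('a::metric_space \<Rightarrow> 'a) \<Rightarrow> real \<Rightarrow> bool" where
  "homothety_ratio f r \<longleftrightarrow> r > 0 \<and> (\<forall>x y. dist (f x) (f y) = r * dist x y)"

definition cone_like :: "('a::metric_space \<Rightarrow> 'a) set \<Rightarrow> (('a \<Rightarrow> 'a) \<Rightarrow> real) \<Rightarrow> bool" where
  "cone_like G \<rho> \<longleftrightarrow>
     locally_compact_space (euclidean :: 'a topology) \<and>
     map_group G \<and> finitely_generated_map_group G \<and> G \<noteq> {id} \<and>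
     acts_freely G \<and> properly_discontinuous G \<and>
     (\<forall>f\<in>G. homothety_ratio f (\<rho> f)) \<and>
     (\<forall>f\<in>G. (\<forall>x y. dist (f x) (f y) = dist x y) \<longrightarrow> f = id) \<and>
     compact_quotient G"

end

theory Submission
  imports Defs
begin

(* Local compactness and compactness of M0/G give a nonempty compact set K
   whose G-translates cover M0, together with a margin delta > 0 such that the
   delta-neighbourhood of K lies in a compact set L.  Write x_n = g_n(k_n) with
   g_n in G and k_n in K.
   The heart of the argument is that the ratios rho(g_n) tend to 0.  Otherwise
   rho(g_n) >= eps for some n beyond the Cauchy index for eps * delta.  Every
   later x_m, pulled back by g_n, lies within delta of k_n, hence in L; so x_m
   lies in g_n(h(L)) for some h in G with h(L) meeting L.  By proper
   discontinuity there are finitely many such h, so the tail of the sequence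
   stays in a compact set and the sequence converges, which is excluded.
   Finally, for a fixed x in K, dist(x_n, g_n(x)) = rho(g_n) * dist(k_n, x)
   <= rho(g_n) * diam K tends to 0.
   The file first collects facts on map groups, orbits and homotheties, then
   builds the fundamental compact set, proves the ratio lemma, and concludes. *)

lemma homothety_ratio_continuous_on:
  assumes "homothety_ratio f r"
  shows "continuous_on S f"
proof -
  have "r-lipschitz_on S f"
    using assms unfolding homothety_ratio_def lipschitz_on_def by auto
  then show ?thesis by (rule lipschitz_on_continuous_on)
qed

lemma map_group_inv:
  assumes "map_group G" "f \<in> G"
  shows "inv f \<in> G" "f (inv f y) = y" "inv f (f x) = x"
  using assms unfolding map_group_def
  by (auto simp: bij_is_surj bij_is_inj surj_f_inv_f)

lemma map_group_comp:
  assumes "map_group G" "f \<in> G" "g \<in> G"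
  shows "f \<circ> g \<in> G"
  using assms unfolding map_group_def by auto

lemma orbit_eq_iff:
  assumes "map_group G"
  shows "orbit G y = orbit G z \<longleftrightarrow> (\<exists>g\<in>G. y = g z)"
proof
  assume eq: "orbit G y = orbit G z"
  have "id \<in> G" using assms unfolding map_group_def by auto
  then have "y \<in> orbit G y" unfolding orbit_def using image_eqI[of y "\<lambda>f. f y" id G] by simp
  then show "\<exists>g\<in>G. y = g z" using eq unfolding orbit_def by auto
next
  assume "\<exists>g\<in>G. y = g z"
  then obtain g where g: "g \<in> G" "y = g z" by blast
  show "orbit G y = orbit G z"
  proof
    show "orbit G y \<subseteq> orbit G z"
    proof
      fix w assume "w \<in> orbit G y"
      then obtain e where e: "e \<in> G" "w = e y" unfolding orbit_def by auto
      have "e \<circ> g \<in> G" using map_group_comp[OF assms e(1) g(1)] .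
      moreover have "(e \<circ> g) z = w" using e g by simp
      ultimately show "w \<in> orbit G z"
        unfolding orbit_def using image_eqI[of w "\<lambda>f. f z" "e \<circ> g" G] by simp
    qed
    show "orbit G z \<subseteq> orbit G y"
    proof
      fix w assume "w \<in> orbit G z"
      then obtain h where h: "h \<in> G" "w = h z" unfolding orbit_def by auto
      have "h \<circ> inv g \<in> G" using map_group_comp[OF assms h(1) map_group_inv(1)[OF assms g(1)]] .
      moreover have "(h \<circ> inv g) y = w" using g h map_group_inv(3)[OF assms g(1)] by simp
      ultimately show "w \<in> orbit G y"
        unfolding orbit_def using image_eqI[of w "\<lambda>f. f y" "h \<circ> inv g" G] by simp
    qed
  qed
qed

lemma open_saturation:
  assumes mg: "map_group G" and cont: "\<And>f. f \<in> G \<Longrightarrow> continuous_on UNIV f"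
    and "open U"
  shows "open (\<Union>g\<in>G. g ` U)"
proof -
  have "open (g ` U)" if g: "g \<in> G" for g
  proof -
    have "g ` U = inv g -` U"
    proof
      show "g ` U \<subseteq> inv g -` U" using map_group_inv(3)[OF mg g] by auto
      show "inv g -` U \<subseteq> g ` U"
      proof
        fix y assume "y \<in> inv g -` U"
        then have "inv g y \<in> U" by simp
        moreover have "g (inv g y) = y" by (rule map_group_inv(2)[OF mg g])
        ultimately show "y \<in> g ` U" by (metis image_eqI)
      qed
    qed
    moreover have "continuous_on UNIV (inv g)" using cont map_group_inv(1)[OF mg g] .
    ultimately show ?thesis by (simp add: \<open>open U\<close> open_vimage)
  qed
  then show ?thesis by auto
qed

lemma compact_quotient_finite_cover:
  assumes mg: "map_group G" and cont: "\<And>f. f \<in> G \<Longrightarrow> continuous_on UNIV f"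
    and cq: "compact_quotient G" and opn: "\<And>p. open (U p)" and mem: "\<And>p. p \<in> U p"
  obtains P where "finite P" "\<forall>y. \<exists>p\<in>P. \<exists>z\<in>U p. \<exists>g\<in>G. y = g z"
proof -
  from cq obtain Q where qm: "quotient_map euclidean Q (orbit G)" and cs: "compact_space Q"
    unfolding compact_quotient_def by auto
  have tsQ: "topspace Q = range (orbit G)"
    using qm unfolding quotient_map_def by auto
  have opnQ: "openin Q (orbit G ` U p)" for p
  proof -
    have "orbit G x \<in> orbit G ` U p \<longleftrightarrow> (\<exists>z\<in>U p. \<exists>g\<in>G. x = g z)" for x
      unfolding image_iff orbit_eq_iff[OF mg] ..
    then have "{x \<in> topspace euclidean. orbit G x \<in> orbit G ` U p} = (\<Union>g\<in>G. g ` U p)"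
      by auto
    then have "openin euclidean {x \<in> topspace euclidean. orbit G x \<in> orbit G ` U p}"
      using open_saturation[OF mg cont opn] by simp
    moreover have "orbit G ` U p \<subseteq> topspace Q" using tsQ by auto
    ultimately show ?thesis using qm unfolding quotient_map_def by blast
  qed
  have "topspace Q \<subseteq> \<Union>(range (\<lambda>p. orbit G ` U p))" using tsQ mem by auto
  then obtain F where F: "finite F" "F \<subseteq> range (\<lambda>p. orbit G ` U p)" "topspace Q \<subseteq> \<Union>F"
    using cs opnQ unfolding compact_space_alt by (metis (no_types, lifting) rangeE)
  then obtain P where P: "finite P" "F = (\<lambda>p. orbit G ` U p) ` P"
    using finite_subset_image by metis
  have "\<forall>y. \<exists>p\<in>P. \<exists>z\<in>U p. \<exists>g\<in>G. y = g z"
  proof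
    fix y
    have "orbit G y \<in> topspace Q" using tsQ by auto
    then obtain p where p: "p \<in> P" "orbit G y \<in> orbit G ` U p" using F P by auto
    then obtain z where "z \<in> U p" "orbit G y = orbit G z" by auto
    then show "\<exists>p\<in>P. \<exists>z\<in>U p. \<exists>g\<in>G. y = g z" using p(1) orbit_eq_iff[OF mg] by blast
  qed
  with P(1) show ?thesis by (rule that)
qed

lemma locally_compact_space_compact_cball:
  assumes "locally_compact_space (euclidean :: 'a::metric_space topology)"
  obtains e where "e > 0" "\<forall>d\<le>e. compact (cball (x::'a) d)"
proof -
  from assms obtain U K where UK: "open U" "compact K" "x \<in> U" "U \<subseteq> K"
    unfolding locally_compact_space_def
    by (metis UNIV_I topspace_euclidean open_openin compactin_euclidean_iff)
  then obtain e where e: "e > 0" "ball x e \<subseteq> U" using open_contains_ball by blast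
  have "compact (cball x d)" if "d \<le> e/2" for d
  proof -
    have "cball x d \<subseteq> K" using e UK that by (auto simp: subset_iff)
    then have "cball x d = K \<inter> cball x d" by auto
    then show ?thesis using UK(2) by (metis closed_cball compact_Int_closed)
  qed
  with e(1) show ?thesis using that[of "e/2"] by simp
qed

lemma locally_compact_space_compact_radii:
  assumes lc: "locally_compact_space (euclidean :: 'a::metric_space topology)"
  obtains r :: "'a::metric_space \<Rightarrow> real"
    where "\<forall>p. r p > 0 \<and> compact (cball p (r p)) \<and> compact (cball p (2 * r p))"
proof -
  have "\<forall>p::'a. \<exists>r. r > 0 \<and> compact (cball p r) \<and> compact (cball p (2 * r))"
  proof
    fix p :: 'a
    obtain e where "e > 0" "\<forall>d\<le>e. compact (cball p d)"
      by (rule locally_compact_space_compact_cball[OF lc, where x = p])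
    then show "\<exists>r. r > 0 \<and> compact (cball p r) \<and> compact (cball p (2 * r))"
      by (intro exI[of _ "e/2"]) auto
  qed
  then have "\<exists>r. \<forall>p::'a. r p > 0 \<and> compact (cball p (r p)) \<and> compact (cball p (2 * r p))"
    by (rule choice)
  with that show ?thesis by blast
qed

lemma finite_balls_margin:
  fixes P :: "'a::metric_space set"
  assumes "finite P" "P \<noteq> {}" "\<And>p. r p > 0"
  shows "Min (r ` P) > 0"
    and "(\<Union>k\<in>(\<Union>p\<in>P. cball p (r p)). ball k (Min (r ` P))) \<subseteq> (\<Union>p\<in>P. cball p (2 * r p))"
proof -
  show "Min (r ` P) > 0" using assms by simp
  show "(\<Union>k\<in>(\<Union>p\<in>P. cball p (r p)). ball k (Min (r ` P))) \<subseteq> (\<Union>p\<in>P. cball p (2 * r p))"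
  proof clarify
    fix p k y assume p: "p \<in> P" "k \<in> cball p (r p)" and y: "y \<in> ball k (Min (r ` P))"
    have "Min (r ` P) \<le> r p" using assms(1) p(1) by simp
    then have "dist p y \<le> 2 * r p"
      using p(2) y dist_triangle[of p y k] by (simp add: dist_commute)
    then show "y \<in> (\<Union>p\<in>P. cball p (2 * r p))" using p(1) by auto
  qed
qed

text \<open>K is a finite union of small closed balls whose open
  cores meet every orbit (compactness of the quotient), L the union of the doubled balls.\<close>
lemma cone_like_fundamental_compact:
  assumes cl: "cone_like G \<rho>"
  obtains K L and \<delta> :: real where "compact K" "K \<noteq> {}" "compact L" "\<delta> > 0"
    "(\<Union>g\<in>G. g ` K) = UNIV" "(\<Union>k\<in>K. ball k \<delta>) \<subseteq> L"
proof -
  have lc: "locally_compact_space (euclidean::'a topology)" and mg: "map_group G"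
    and cont: "\<And>f. f \<in> G \<Longrightarrow> continuous_on UNIV f" and cq: "compact_quotient G"
    using cl homothety_ratio_continuous_on unfolding cone_like_def by blast+
  obtain r :: "'a \<Rightarrow> real"
    where "\<forall>p. r p > 0 \<and> compact (cball p (r p)) \<and> compact (cball p (2 * r p))"
    by (rule locally_compact_space_compact_radii[OF lc])
  then have r: "r p > 0" "compact (cball p (r p))" "compact (cball p (2 * r p))" for p by blast+
  have centre: "p \<in> ball p (r p)" for p using r(1) by simp
  obtain P where P: "finite P" and cov: "\<forall>y. \<exists>p\<in>P. \<exists>z\<in>ball p (r p). \<exists>g\<in>G. y = g z"
    by (rule compact_quotient_finite_cover[OF mg cont cq open_ball centre])
  then have "P \<noteq> {}" by blast
  define K where "K = (\<Union>p\<in>P. cball p (r p))"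
  define L where "L = (\<Union>p\<in>P. cball p (2 * r p))"
  have "(\<Union>g\<in>G. g ` K) = UNIV"
  proof -
    have "y \<in> (\<Union>g\<in>G. g ` K)" for y
    proof -
      obtain p z g where "p \<in> P" "z \<in> ball p (r p)" "g \<in> G" "y = g z" using cov by blast
      moreover from this have "z \<in> K" unfolding K_def by (auto intro!: bexI[of _ p])
      ultimately show ?thesis by blast
    qed
    then show ?thesis by blast
  qed
  moreover have "compact K" unfolding K_def using P r(2) by blast
  moreover have "K \<noteq> {}"
  proof -
    obtain p where "p \<in> P" using \<open>P \<noteq> {}\<close> by blast
    moreover have "p \<in> cball p (r p)" using r(1)[of p] by simp
    ultimately show ?thesis unfolding K_def by blast
  qed
  moreover have "compact L" unfolding L_def using P r(3) by blast
  moreover note finite_balls_margin[of P r, OF P \<open>P \<noteq> {}\<close> r(1), folded K_def L_def]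
  ultimately show ?thesis by (intro that)
qed

lemma Cauchy_eventually_in_compact_convergent:
  fixes X :: "nat \<Rightarrow> 'a::metric_space"
  assumes "Cauchy X" "compact C" "\<And>m. m \<ge> N \<Longrightarrow> X m \<in> C"
  shows "convergent X"
proof -
  have "Cauchy (\<lambda>m. X (m + N))"
    using Cauchy_subseq_Cauchy[OF assms(1), of "\<lambda>m. m + N"] by (simp add: strict_mono_def comp_def)
  moreover have "\<forall>m. X (m + N) \<in> C" using assms(3) by simp
  ultimately have "\<exists>l\<in>C. (\<lambda>m. X (m + N)) \<longlonglongrightarrow> l"
    by (intro compact_imp_complete[OF assms(2), unfolded complete_def, rule_format] conjI)
  then obtain l where "(\<lambda>m. X (m + N)) \<longlonglongrightarrow> l" by blast
  then show ?thesis using LIMSEQ_offset[of X N l] by (auto intro: convergentI)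
qed

text \<open>The elements of G moving L into a position where it meets itself; for compact L
  and a properly discontinuous action there are only finitely many of them.\<close>
definition self_meeting :: "('a \<Rightarrow> 'a) set \<Rightarrow> 'a set \<Rightarrow> ('a \<Rightarrow> 'a) set" where
  "self_meeting G L = {h \<in> G. h ` L \<inter> L \<noteq> {}}"

text \<open>A translate f j (j \<in> K) that is (c \<delta>)-close to g k (k \<in> K), where g has ratio c,
  lies in g(h(L)) for some h \<in> self_meeting G L: pulling back by g lands in the
  \<delta>-neighbourhood of K, which lies in L.\<close>
lemma close_translate_in_finitely_many:
  assumes mg: "map_group G" and g: "g \<in> G" "homothety_ratio g c" and f: "f \<in> G"
    and "k \<in> K" "j \<in> K" and nbhd: "(\<Union>k\<in>K. ball k \<delta>) \<subseteq> L"
    and close: "dist (f j) (g k) < c * \<delta>"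
  shows "f j \<in> (\<Union>h\<in>self_meeting G L. (g \<circ> h) ` L)"
proof -
  define h where "h = inv g \<circ> f"
  have hG: "h \<in> G" unfolding h_def by (rule map_group_comp[OF mg map_group_inv(1)[OF mg g(1)] f])
  have pullback: "g (h j) = f j" unfolding h_def using map_group_inv(2)[OF mg g(1)] by simp
  have "c * dist (h j) k = dist (g (h j)) (g k)" using g(2) unfolding homothety_ratio_def by simp
  then have "c * dist (h j) k < c * \<delta>" using pullback close by simp
  then have "dist (h j) k < \<delta>" using g(2) unfolding homothety_ratio_def by simp
  moreover from this have "\<delta> > 0" using zero_le_dist[of "h j" k] by linarith
  ultimately have "h j \<in> ball k \<delta>" and "j \<in> ball j \<delta>" by (simp_all add: dist_commute)
  then have "h j \<in> L" and "j \<in> L" using nbhd \<open>k \<in> K\<close> \<open>j \<in> K\<close> by blast+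
  then show ?thesis using hG pullback unfolding self_meeting_def
    by (auto intro!: bexI[of _ h] image_eqI[of _ _ j])
qed

text \<open>The key step: if a Cauchy sequence without limit is written as x_n = g_n(k_n)
  with k_n in K, the ratios of the g_n tend to 0.  Otherwise some g_n with ratio
  at least \<epsilon> occurs beyond the Cauchy index for \<epsilon>\<delta>, and the whole tail then lies
  in the compact set g_n(h(L)), h \<in> self_meeting G L, forcing convergence.\<close>
lemma homothety_ratios_tendsto_zero:
  assumes mg: "map_group G" and pd: "properly_discontinuous G"
    and hom: "\<And>f. f \<in> G \<Longrightarrow> homothety_ratio f (\<rho> f)"
    and L: "compact L" and \<delta>: "\<delta> > 0" and nbhd: "(\<Union>k\<in>K. ball k \<delta>) \<subseteq> L"
    and g: "\<And>n. g n \<in> G" and k: "\<And>n. k n \<in> K" and xs: "\<And>n. xs n = g n (k n)"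
    and cau: "Cauchy xs" and nconv: "\<not> convergent xs"
  shows "(\<lambda>n. \<rho> (g n)) \<longlonglongrightarrow> 0"
proof (rule ccontr)
  assume "\<not> (\<lambda>n. \<rho> (g n)) \<longlonglongrightarrow> 0"
  moreover have "\<rho> (g n) > 0" for n using hom[OF g] unfolding homothety_ratio_def by blast
  ultimately obtain \<epsilon> where \<epsilon>: "\<epsilon> > 0" and freq: "\<And>N. \<exists>n\<ge>N. \<epsilon> \<le> \<rho> (g n)"
    unfolding LIMSEQ_iff by (auto simp: not_less abs_of_pos)
  obtain N where N: "\<And>m n. m \<ge> N \<Longrightarrow> n \<ge> N \<Longrightarrow> dist (xs m) (xs n) < \<epsilon> * \<delta>"
    using metric_CauchyD[OF cau, of "\<epsilon> * \<delta>"] \<epsilon> \<delta> by auto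
  obtain n where n: "n \<ge> N" "\<epsilon> \<le> \<rho> (g n)" using freq by blast
  define C where "C = (\<Union>h\<in>self_meeting G L. (g n \<circ> h) ` L)"
  have "compact C"
  proof -
    have "finite (self_meeting G L)"
      using pd L unfolding properly_discontinuous_def self_meeting_def by blast
    moreover have "compact ((g n \<circ> h) ` L)" if "h \<in> self_meeting G L" for h
    proof -
      have "g n \<circ> h \<in> G" using that map_group_comp[OF mg g[of n]] unfolding self_meeting_def by blast
      then show ?thesis
        using compact_continuous_image[OF homothety_ratio_continuous_on[OF hom] L] by blast
    qed
    ultimately show ?thesis unfolding C_def by blast
  qed
  moreover have "xs m \<in> C" if "m \<ge> N" for m
  proof -
    have "dist (g m (k m)) (g n (k n)) < \<rho> (g n) * \<delta>"
      using N[OF that n(1)] mult_right_mono[OF n(2) less_imp_le[OF \<delta>]] xs by simp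
    then show ?thesis unfolding C_def xs
      by (rule close_translate_in_finitely_many[OF mg g[of n] hom[OF g[of n]] g[of m] k[of n] k[of m] nbhd])
  qed
  ultimately have "convergent xs" by (rule Cauchy_eventually_in_compact_convergent[OF cau])
  with nconv show False ..
qed

lemma homothety_images_approach:
  assumes hom: "\<And>n. homothety_ratio (g n) (c n)" and c: "c \<longlonglongrightarrow> 0"
    and "bounded K" and k: "\<And>n. k n \<in> K" and "x \<in> K"
  shows "(\<lambda>n. dist (g n (k n)) (g n x)) \<longlonglongrightarrow> 0"
proof -
  obtain B where B: "\<And>a b. a \<in> K \<Longrightarrow> b \<in> K \<Longrightarrow> dist a b \<le> B"
    using \<open>bounded K\<close> unfolding bounded_two_points by blast
  have "norm (dist (g n (k n)) (g n x)) \<le> c n * B" for n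
  proof -
    have "c n > 0" and "dist (g n (k n)) (g n x) = c n * dist (k n) x"
      using hom[of n] unfolding homothety_ratio_def by blast+
    then have "norm (dist (g n (k n)) (g n x)) = c n * dist (k n) x" by simp
    also have "\<dots> \<le> c n * B" using B[OF k \<open>x \<in> K\<close>] \<open>c n > 0\<close> by (intro mult_left_mono) auto
    finally show ?thesis .
  qed
  then have "\<forall>\<^sub>F n in sequentially. norm (dist (g n (k n)) (g n x)) \<le> c n * B" by simp
  moreover have "(\<lambda>n. c n * B) \<longlonglongrightarrow> 0"
    using tendsto_mult_left_zero[OF c, of B] by (simp add: mult.commute)
  ultimately show ?thesis by (rule Lim_null_comparison)
qed

theorem lemma2p3:
  fixes G :: "('a::metric_space \<Rightarrow> 'a) set" and \<rho> :: "('a \<Rightarrow> 'a) \<Rightarrow> real"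
    and xs :: "nat \<Rightarrow> 'a"
  assumes "cone_like G \<rho>"
    and "Cauchy xs"
    and "\<not> convergent xs"
  shows "\<exists>x fs. (\<forall>n. fs n \<in> G) \<and> (\<lambda>n. \<rho> (fs n)) \<longlonglongrightarrow> 0 \<and>
           (\<lambda>n. dist (xs n) (fs n x)) \<longlonglongrightarrow> 0"
proof -
  have mg: "map_group G" and pd: "properly_discontinuous G"
    and hom: "\<And>f. f \<in> G \<Longrightarrow> homothety_ratio f (\<rho> f)"
    using assms(1) unfolding cone_like_def by auto
  obtain K L and \<delta> :: real where K: "compact K" "K \<noteq> {}" and L: "compact L" and \<delta>: "\<delta> > 0"
    and cover: "(\<Union>g\<in>G. g ` K) = UNIV" and nbhd: "(\<Union>k\<in>K. ball k \<delta>) \<subseteq> L"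
    by (rule cone_like_fundamental_compact[OF assms(1)])
  have "\<forall>n. \<exists>g. g \<in> G \<and> (\<exists>k. k \<in> K \<and> xs n = g k)" using cover by blast
  then obtain g where g: "\<And>n. g n \<in> G" and "\<forall>n. \<exists>k. k \<in> K \<and> xs n = g n k"
    by (metis choice)
  then obtain k where k: "\<And>n. k n \<in> K" and xs: "\<And>n. xs n = g n (k n)"
    by (metis choice)
  obtain x where x: "x \<in> K" using K(2) by blast
  have ratios: "(\<lambda>n. \<rho> (g n)) \<longlonglongrightarrow> 0"
    by (rule homothety_ratios_tendsto_zero[OF mg pd hom L \<delta> nbhd g k xs assms(2,3)])
  have "(\<lambda>n. dist (xs n) (g n x)) \<longlonglongrightarrow> 0"
    unfolding xs by (rule homothety_images_approach[OF hom[OF g] ratios compact_imp_bounded[OF K(1)] k x])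
  with g ratios show ?thesis by blast
qed

end
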